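(* Let $\Omega_{AB}$ be a joint state space with $\Omega_A\otimes_{\min}\Omega_B\subseteq\Omega_{AB}\subseteq\Omega_A\otimes_{\max}\Omega_B$. Consider a dense coding protocol with initial state $\phi\in\Omega_{AB}$, message distribution $p_x$ and allowed local transformations $T_x$ on $A$, in which Bob's decoding measurement has effects of the form $$E_{y_1,y_2}=\sum_z q_z\, e^{(z)}_{y_1}\otimes f^{(z)}_{y_2},$$ where $\{q_z\}$ is a probability distribution and, for each $z$, $\{e^{(z)}_{y_1}\}_{y_1}\subset\mathcal E_A$ with $\sum_{y_1}e^{(z)}_{y_1}=u_A$ and $\{f^{(z)}_{y_2}\}_{y_2}\subset\mathcal E_B$ with $\sum_{y_2}f^{(z)}_{y_2}=u_B$. Then the mutual information between the message $X$ and the outcome pair $(Y_1,Y_2)$ satisfies $I(X:Y_1Y_2)\le\chi_C(\Omega_A)$. In particular no such protocol achieves superdense coding.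
   Context: Single systems: $\Omega_A\subset\mathbb R^{n_A+1}$, $\Omega_B\subset\mathbb R^{n_B+1}$ are GPT state spaces of the form $\{(1,r)^{\mathrm t}: r\in\mathcal R\}$ with $\mathcal R$ compact convex, unit effects $u_A,u_B=(1,\mathbf 0)^{\mathrm t}$, effect sets $\mathcal E_A=\{e:0\le e\cdot\omega\le1\ \forall\omega\in\Omega_A\}$ (similarly $\mathcal E_B$). Bipartite states are real $(n_A+1)\times(n_B+1)$ matrices, identified with $\mathbb R^{n_A+1}\otimes\mathbb R^{n_B+1}$ via $v\otimes w=vw^{\mathrm t}$, inner product $X\cdot Y=\mathrm{Tr}(X^{\mathrm t}Y)$. $\Omega_A\otimes_{\min}\Omega_B$ is the convex hull of product states $\omega_A\otimes\omega_B$; $\Omega_A\otimes_{\max}\Omega_B=\{\phi:(u_A\otimes u_B)\cdot\phi=1,\ (e\otimes f)\cdot\phi\ge0\ \forall e\in\mathcal E_A,f\in\mathcal E_B\}$. $\Omega_{AB}$ is closed and convex; $\mathcal E_{AB}=\{E:0\le E\cdot\phi\le1\ \forall\phi\in\Omega_{AB}\}$. An allowed local transformation on $A$ is a linear map $T$ with $T\Omega_A\subseteq\Omega_A$ and $T\phi\in\Omega_{AB}$ for all $\phi\in\Omega_{AB}$. In the dense coding protocol, outcome probabilities are $p(y_1,y_2|x)=E_{y_1,y_2}\cdot(T_x\phi)$. Classical capacity $\chi_C(\Omega_A)$: supremum of $I(X:Y)$ over finite message distributions, states $\omega_x\in\Omega_A$ and measurements $\{e_y\}\subset\mathcal E_A$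 ($\sum_y e_y=u_A$) with $p(y|x)=e_y\cdot\omega_x$. Superdense coding means $I(X:Y)>\chi_C(\Omega_A)$. *)

theory Defs
  imports "HOL-Analysis.Analysis"
begin

text \<open>Single-system vectors live in real^'a, where the distinguished index a0 :: 'a
  plays the role of the first (normalisation) coordinate.  Bipartite objects are
  matrices real^'b^'a (rows indexed by A), with v \<otimes> w = v w^t and the
  Frobenius inner product Tr(X^t Y), which is the inner product on real^'b^'a.\<close>

definition unit_eff :: "'a::finite \<Rightarrow> real^'a" where
  "unit_eff a0 = axis a0 1"

definition state_space :: "'a::finite \<Rightarrow> (real^'a) set \<Rightarrow> bool" where
  "state_space a0 \<Omega> \<longleftrightarrow> compact \<Omega> \<and> convex \<Omega> \<and> (\<forall>\<omega>\<in>\<Omega>. \<omega> $ a0 = 1)"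

definition effects :: "(real^'a::finite) set \<Rightarrow> (real^'a) set" where
  "effects \<Omega> = {e. \<forall>\<omega>\<in>\<Omega>. 0 \<le> e \<bullet> \<omega> \<and> e \<bullet> \<omega> \<le> 1}"

definition tens :: "real^'a::finite \<Rightarrow> real^'b::finite \<Rightarrow> real^'b^'a" where
  "tens v w = (\<chi> i j. v $ i * w $ j)"

definition min_tensor :: "(real^'a::finite) set \<Rightarrow> (real^'b::finite) set \<Rightarrow> (real^'b^'a) set" where
  "min_tensor \<Omega>A \<Omega>B = convex hull {tens \<omega>A \<omega>B | \<omega>A \<omega>B. \<omega>A \<in> \<Omega>A \<and> \<omega>B \<in> \<Omega>B}"

definition max_tensor :: "'a::finite \<Rightarrow> 'b::finite \<Rightarrow> (real^'a) set \<Rightarrow> (real^'b) set \<Rightarrow> (real^'b^'a) set" where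
  "max_tensor a0 b0 \<Omega>A \<Omega>B = {\<phi>. tens (unit_eff a0) (unit_eff b0) \<bullet> \<phi> = 1 \<and>
      (\<forall>e\<in>effects \<Omega>A. \<forall>f\<in>effects \<Omega>B. tens e f \<bullet> \<phi> \<ge> 0)}"

definition allowed_local_A :: "(real^'a::finite) set \<Rightarrow> (real^'b::finite^'a) set \<Rightarrow> real^'a^'a \<Rightarrow> bool" where
  "allowed_local_A \<Omega>A \<Omega>AB T \<longleftrightarrow> (\<forall>\<omega>\<in>\<Omega>A. T *v \<omega> \<in> \<Omega>A) \<and> (\<forall>\<phi>\<in>\<Omega>AB. T ** \<phi> \<in> \<Omega>AB)"

definition prob_dist :: "'x set \<Rightarrow> ('x \<Rightarrow> real) \<Rightarrow> bool" where
  "prob_dist X p \<longleftrightarrow> finite X \<and> (\<forall>x\<in>X. 0 \<le> p x) \<and> (\<Sum>x\<in>X. p x) = 1"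

definition mutual_info :: "'x set \<Rightarrow> 'y set \<Rightarrow> ('x \<Rightarrow> real) \<Rightarrow> ('x \<Rightarrow> 'y \<Rightarrow> real) \<Rightarrow> real" where
  "mutual_info X Y p P = (\<Sum>x\<in>X. \<Sum>y\<in>Y.
     (if p x * P x y = 0 then 0
      else p x * P x y * log 2 (P x y / (\<Sum>x'\<in>X. p x' * P x' y))))"

definition classical_capacity :: "'a::finite \<Rightarrow> (real^'a) set \<Rightarrow> ereal" where
  "classical_capacity a0 \<Omega> = Sup {ereal (mutual_info X Y p (\<lambda>x y. e y \<bullet> \<omega> x)) |
      (X :: nat set) (Y :: nat set) p \<omega> e.
      prob_dist X p \<and> finite Y \<and> (\<forall>x\<in>X. \<omega> x \<in> \<Omega>) \<and> (\<forall>y\<in>Y. e y \<in> effects \<Omega>) \<and>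
      (\<Sum>y\<in>Y. e y) = unit_eff a0}"

end

theory Submission
  imports Defs
begin

text \<open>If Bob obtains outcome y2 of his local measurement f^(z), Alice's side of
  \<phi> collapses (up to a nonnegative weight) to a state \<omega> of \<Omega>A: positivity on products of
  effects, which \<Omega>AB inherits from the maximal tensor product, means that \<phi> f lies in the
  dual cone of the effects, i.e. in the cone over \<Omega>A.  Hence the channel x \<mapsto> (y1, y2) is a
  convex combination, over the pairs (z, y2), of channels that encode x into the state
  T_x \<omega> of A alone and decode with e^(z).  Mutual information is convex in the channel
  (log-sum inequality), and each of these channels is a classical protocol on \<Omega>A.\<close>

section \<open>Mutual information\<close>

definition rel_entr :: "real \<Rightarrow> real \<Rightarrow> real" where
  "rel_entr a b = (if a = 0 then 0 else a * log 2 (a / b))"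

lemma rel_entr_scale: "0 \<le> c \<Longrightarrow> rel_entr (c * a) (c * b) = c * rel_entr a b"
  by (auto simp: rel_entr_def)

lemma mult_log_le_tangent:
  fixes a b A B :: real
  assumes "a > 0" "b > 0" "A > 0" "B > 0"
  shows "a * log 2 (A / B) \<le> a * log 2 (a / b) + (A * b / B - a) / ln 2"
proof -
  have "log 2 (A / B) - log 2 (a / b) = ln (A * b / (B * a)) / ln 2"
    using assms by (simp add: log_def ln_div ln_mult field_simps)
  also have "\<dots> \<le> (A * b / (B * a) - 1) / ln 2"
    using assms by (intro divide_right_mono ln_le_minus_one) auto
  finally have "a * (log 2 (A / B) - log 2 (a / b)) \<le> a * ((A * b / (B * a) - 1) / ln 2)"
    using assms by (intro mult_left_mono) auto
  also have "\<dots> = (A * b / B - a) / ln 2"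
    using assms by (simp add: field_simps)
  finally show ?thesis by (simp add: algebra_simps)
qed

lemma log_sum_inequality:
  assumes K: "finite K" and a: "\<And>k. k \<in> K \<Longrightarrow> 0 \<le> a k" and b: "\<And>k. k \<in> K \<Longrightarrow> 0 \<le> b k"
    and ab: "\<And>k. k \<in> K \<Longrightarrow> a k > 0 \<Longrightarrow> b k > 0"
  shows "rel_entr (\<Sum>k\<in>K. a k) (\<Sum>k\<in>K. b k) \<le> (\<Sum>k\<in>K. rel_entr (a k) (b k))"
proof -
  define K' where "K' = {k\<in>K. a k > 0}"
  have "finite K'" using K by (simp add: K'_def)
  have sum_a: "(\<Sum>k\<in>K. a k) = (\<Sum>k\<in>K'. a k)"
    unfolding K'_def using K a by (intro sum.mono_neutral_right) (auto, force)
  have sum_rel_entr: "(\<Sum>k\<in>K. rel_entr (a k) (b k)) = (\<Sum>k\<in>K'. rel_entr (a k) (b k))"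
    unfolding K'_def using K a by (intro sum.mono_neutral_right) (auto simp: rel_entr_def, force)
  show ?thesis
  proof (cases "K' = {}")
    case True
    then show ?thesis using sum_a sum_rel_entr by (simp add: rel_entr_def)
  next
    case False
    define A where "A = (\<Sum>k\<in>K'. a k)"
    define B where "B = (\<Sum>k\<in>K. b k)"
    define B' where "B' = (\<Sum>k\<in>K'. b k)"
    have "A > 0" unfolding A_def using \<open>finite K'\<close> False by (intro sum_pos) (auto simp: K'_def)
    have "B' > 0" unfolding B'_def using \<open>finite K'\<close> False ab by (intro sum_pos) (auto simp: K'_def)
    have "B' \<le> B" unfolding B'_def B_def K'_def using K b by (intro sum_mono2) auto
    with \<open>B' > 0\<close> have "B > 0" by linarith
    \<comment> \<open>Sum the tangent bounds; the linear remainder A B'/B - A is nonpositive.\<close>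
    have "A * log 2 (A / B) = (\<Sum>k\<in>K'. a k * log 2 (A / B))"
      unfolding A_def by (simp add: sum_distrib_right)
    also have "\<dots> \<le> (\<Sum>k\<in>K'. a k * log 2 (a k / b k) + (A * b k / B - a k) / ln 2)"
      using \<open>A > 0\<close> \<open>B > 0\<close> ab by (intro sum_mono mult_log_le_tangent) (auto simp: K'_def)
    also have "\<dots> = (\<Sum>k\<in>K'. rel_entr (a k) (b k)) + (A * B' / B - A) / ln 2"
      unfolding A_def B'_def
      by (simp add: sum.distrib sum_subtractf sum_divide_distrib[symmetric] sum_distrib_left
          rel_entr_def K'_def)
    also have "\<dots> \<le> (\<Sum>k\<in>K'. rel_entr (a k) (b k))"
      using \<open>A > 0\<close> \<open>B > 0\<close> \<open>B' \<le> B\<close> by (simp add: divide_simps divide_nonpos_pos)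
    finally show ?thesis using sum_a sum_rel_entr A_def B_def \<open>A > 0\<close> by (simp add: rel_entr_def)
  qed
qed

lemma mutual_info_rel_entr:
  "mutual_info X Y p P =
     (\<Sum>x\<in>X. \<Sum>y\<in>Y. rel_entr (p x * P x y) (p x * (\<Sum>x'\<in>X. p x' * P x' y)))"
  unfolding mutual_info_def rel_entr_def
  by (intro sum.cong refl) (auto simp: mult_divide_mult_cancel_left)

lemma mutual_info_cong:
  assumes "\<And>x y. x \<in> X \<Longrightarrow> y \<in> Y \<Longrightarrow> P x y = P' x y"
  shows "mutual_info X Y p P = mutual_info X Y p P'"
proof -
  have "\<And>y. y \<in> Y \<Longrightarrow> (\<Sum>x'\<in>X. p x' * P x' y) = (\<Sum>x'\<in>X. p x' * P' x' y)"
    using assms by (intro sum.cong) auto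
  then show ?thesis unfolding mutual_info_def using assms by (intro sum.cong refl) auto
qed

lemma mutual_info_scale:
  assumes "0 \<le> c"
  shows "mutual_info X Y p (\<lambda>x y. c * C x y) = c * mutual_info X Y p C"
proof -
  have "mutual_info X Y p (\<lambda>x y. c * C x y) =
     (\<Sum>x\<in>X. \<Sum>y\<in>Y. rel_entr (c * (p x * C x y)) (c * (p x * (\<Sum>x'\<in>X. p x' * C x' y))))"
    unfolding mutual_info_rel_entr by (intro sum.cong refl arg_cong2[where f=rel_entr])
      (auto simp: sum_distrib_left algebra_simps)
  also have "\<dots> = (\<Sum>x\<in>X. \<Sum>y\<in>Y. c * rel_entr (p x * C x y) (p x * (\<Sum>x'\<in>X. p x' * C x' y)))"
    using assms by (simp add: rel_entr_scale)
  also have "\<dots> = c * mutual_info X Y p C"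
    unfolding mutual_info_rel_entr by (simp add: sum_distrib_left)
  finally show ?thesis .
qed

lemma mutual_info_sum_le:
  assumes X: "finite X" and K: "finite K"
    and p: "\<And>x. x \<in> X \<Longrightarrow> 0 \<le> p x"
    and C: "\<And>k x y. k \<in> K \<Longrightarrow> x \<in> X \<Longrightarrow> y \<in> Y \<Longrightarrow> 0 \<le> C k x y"
  shows "mutual_info X Y p (\<lambda>x y. \<Sum>k\<in>K. C k x y) \<le> (\<Sum>k\<in>K. mutual_info X Y p (C k))"
proof -
  have "mutual_info X Y p (\<lambda>x y. \<Sum>k\<in>K. C k x y) =
    (\<Sum>x\<in>X. \<Sum>y\<in>Y. rel_entr (\<Sum>k\<in>K. p x * C k x y) (\<Sum>k\<in>K. p x * (\<Sum>x'\<in>X. p x' * C k x' y)))"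
    unfolding mutual_info_rel_entr by (intro sum.cong refl arg_cong2[where f=rel_entr])
      (auto simp: sum_distrib_left intro: sum.swap)
  also have "\<dots> \<le> (\<Sum>x\<in>X. \<Sum>y\<in>Y. \<Sum>k\<in>K.
      rel_entr (p x * C k x y) (p x * (\<Sum>x'\<in>X. p x' * C k x' y)))"
  proof (intro sum_mono log_sum_inequality K)
    fix x y k assume "x \<in> X" "y \<in> Y" "k \<in> K"
    have "0 \<le> (\<Sum>x'\<in>X. p x' * C k x' y)"
      using p C \<open>y \<in> Y\<close> \<open>k \<in> K\<close> by (intro sum_nonneg) auto
    then show "0 \<le> p x * C k x y" "0 \<le> p x * (\<Sum>x'\<in>X. p x' * C k x' y)"
      using p C \<open>x \<in> X\<close> \<open>y \<in> Y\<close> \<open>k \<in> K\<close> by auto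
    assume pos: "0 < p x * C k x y"
    have "p x * C k x y \<le> (\<Sum>x'\<in>X. p x' * C k x' y)"
      using p C \<open>x \<in> X\<close> \<open>y \<in> Y\<close> \<open>k \<in> K\<close> X by (intro member_le_sum) auto
    moreover have "0 < p x"
      using pos p[OF \<open>x \<in> X\<close>] C[OF \<open>k \<in> K\<close> \<open>x \<in> X\<close> \<open>y \<in> Y\<close>] by (simp add: zero_less_mult_iff)
    ultimately show "0 < p x * (\<Sum>x'\<in>X. p x' * C k x' y)" using pos by simp
  qed
  also have "\<dots> = (\<Sum>k\<in>K. mutual_info X Y p (C k))"
    unfolding mutual_info_rel_entr by (subst sum.swap, subst (2) sum.swap) (rule refl)
  finally show ?thesis .
qed

lemma prob_dist_mixture_kernel:
  assumes "prob_dist Z q" and "finite Y"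
    and "\<And>z y. z \<in> Z \<Longrightarrow> y \<in> Y \<Longrightarrow> 0 \<le> l z y" and "\<And>z. z \<in> Z \<Longrightarrow> (\<Sum>y\<in>Y. l z y) = 1"
  shows "prob_dist (Z \<times> Y) (\<lambda>(z, y). q z * l z y)"
  using assms unfolding prob_dist_def
  by (simp add: sum.cartesian_product[symmetric] sum_distrib_left[symmetric])

lemma mutual_info_mixture_le:
  assumes "finite X" and "\<And>x. x \<in> X \<Longrightarrow> 0 \<le> p x" and w: "prob_dist K w"
    and C: "\<And>k x y. k \<in> K \<Longrightarrow> x \<in> X \<Longrightarrow> y \<in> Y \<Longrightarrow> 0 \<le> C k x y"
    and bound: "\<And>k. k \<in> K \<Longrightarrow> ereal (mutual_info X Y p (C k)) \<le> c"
  shows "ereal (mutual_info X Y p (\<lambda>x y. \<Sum>k\<in>K. w k * C k x y)) \<le> c"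
proof -
  have "finite K" and w_nonneg: "\<And>k. k \<in> K \<Longrightarrow> 0 \<le> w k" and w_sum: "(\<Sum>k\<in>K. w k) = 1"
    using w by (auto simp: prob_dist_def)
  have "mutual_info X Y p (\<lambda>x y. \<Sum>k\<in>K. w k * C k x y)
      \<le> (\<Sum>k\<in>K. mutual_info X Y p (\<lambda>x y. w k * C k x y))"
    using assms \<open>finite K\<close> w_nonneg by (intro mutual_info_sum_le) auto
  also have "\<dots> = (\<Sum>k\<in>K. w k * mutual_info X Y p (C k))"
    using w_nonneg by (intro sum.cong refl mutual_info_scale) auto
  finally have mixture: "mutual_info X Y p (\<lambda>x y. \<Sum>k\<in>K. w k * C k x y)
      \<le> (\<Sum>k\<in>K. w k * mutual_info X Y p (C k))" .
  obtain k0 where "k0 \<in> K" using w_sum by fastforce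
  show ?thesis
  proof (cases c)
    case (real r)
    have "(\<Sum>k\<in>K. w k * mutual_info X Y p (C k)) \<le> (\<Sum>k\<in>K. w k * r)"
      using bound w_nonneg real by (intro sum_mono mult_left_mono) auto
    then show ?thesis
      using mixture real w_sum by (simp add: sum_distrib_right[symmetric])
  qed (use bound[OF \<open>k0 \<in> K\<close>] in auto)
qed

lemma mutual_info_pad_outcome:
  assumes "finite Y2" "y2 \<in> Y2"
  shows "mutual_info X (Y1 \<times> Y2) p (\<lambda>x (y1, y2'). if y2' = y2 then G x y1 else 0)
       = mutual_info X Y1 p G"
proof -
  have "mutual_info X (Y1 \<times> Y2) p (\<lambda>x (y1, y2'). if y2' = y2 then G x y1 else 0)
    = (\<Sum>x\<in>X. \<Sum>y1\<in>Y1. \<Sum>y2'\<in>Y2.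
        if y2' = y2 then rel_entr (p x * G x y1) (p x * (\<Sum>x'\<in>X. p x' * G x' y1)) else 0)"
    unfolding mutual_info_rel_entr sum.cartesian_product' by (intro sum.cong refl) (auto simp: rel_entr_def)
  also have "\<dots> = mutual_info X Y1 p G"
    unfolding mutual_info_rel_entr using assms by simp
  finally show ?thesis .
qed

lemma mutual_info_reindex:
  assumes g: "bij_betw g X' X" and h: "bij_betw h Y' Y"
  shows "mutual_info X' Y' (\<lambda>n. p (g n)) (\<lambda>n m. P (g n) (h m)) = mutual_info X Y p P"
proof -
  define S where "S y = (\<Sum>x'\<in>X. p x' * P x' y)" for y
  have "(\<Sum>x'\<in>X'. p (g x') * P (g x') y) = S y" for y
    unfolding S_def using sum.reindex_bij_betw[OF g, of "\<lambda>x'. p x' * P x' y"] by simp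
  then have "mutual_info X' Y' (\<lambda>n. p (g n)) (\<lambda>n m. P (g n) (h m))
      = (\<Sum>n\<in>X'. \<Sum>m\<in>Y'. rel_entr (p (g n) * P (g n) (h m)) (p (g n) * S (h m)))"
    unfolding mutual_info_rel_entr by simp
  also have "\<dots> = (\<Sum>n\<in>X'. \<Sum>y\<in>Y. rel_entr (p (g n) * P (g n) y) (p (g n) * S y))"
    by (intro sum.cong refl sum.reindex_bij_betw[OF h])
  also have "\<dots> = mutual_info X Y p P"
    unfolding mutual_info_rel_entr S_def by (rule sum.reindex_bij_betw[OF g])
  finally show ?thesis .
qed

lemma mutual_info_le_classical_capacity:
  fixes \<omega> :: "'x \<Rightarrow> real^'a::finite" and e :: "'y \<Rightarrow> real^'a"
  assumes p: "prob_dist X p" and Y: "finite Y" and \<omega>: "\<forall>x\<in>X. \<omega> x \<in> \<Omega>"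
    and e: "\<forall>y\<in>Y. e y \<in> effects \<Omega>" "(\<Sum>y\<in>Y. e y) = unit_eff a0"
  shows "ereal (mutual_info X Y p (\<lambda>x y. e y \<bullet> \<omega> x)) \<le> classical_capacity a0 \<Omega>"
proof -
  have "finite X" using p by (simp add: prob_dist_def)
  \<comment> \<open>The capacity ranges over messages and outcomes indexed by naturals.\<close>
  obtain g where g: "bij_betw g {0..<card X} X" using ex_bij_betw_nat_finite[OF \<open>finite X\<close>] by blast
  obtain h where h: "bij_betw h {0..<card Y} Y" using ex_bij_betw_nat_finite[OF Y] by blast
  have "prob_dist {0..<card X} (p \<circ> g)"
    using p sum.reindex_bij_betw[OF g, of p] bij_betwE[OF g] unfolding prob_dist_def by auto
  moreover have "\<forall>n\<in>{0..<card X}. (\<omega> \<circ> g) n \<in> \<Omega>" using \<omega> bij_betwE[OF g] by auto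
  moreover have "\<forall>m\<in>{0..<card Y}. (e \<circ> h) m \<in> effects \<Omega>" using e bij_betwE[OF h] by auto
  moreover have "(\<Sum>m\<in>{0..<card Y}. (e \<circ> h) m) = unit_eff a0"
    using sum.reindex_bij_betw[OF h, of e] e by simp
  ultimately have "ereal (mutual_info {0..<card X} {0..<card Y} (p \<circ> g)
      (\<lambda>n m. (e \<circ> h) m \<bullet> (\<omega> \<circ> g) n)) \<le> classical_capacity a0 \<Omega>"
    unfolding classical_capacity_def by (intro Sup_upper) blast
  then show ?thesis using mutual_info_reindex[OF g h, of p "\<lambda>x y. e y \<bullet> \<omega> x"] by (simp add: o_def)
qed

section \<open>States and effects\<close>

lemma unit_eff_inner: "unit_eff a0 \<bullet> v = v $ a0"
  by (simp add: unit_eff_def inner_axis')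

lemma unit_eff_in_effects: "state_space a0 \<Omega> \<Longrightarrow> unit_eff a0 \<in> effects \<Omega>"
  by (auto simp: effects_def unit_eff_inner state_space_def)

lemma tens_inner: "tens e f \<bullet> M = e \<bullet> (M *v f)"
  by (simp add: tens_def inner_vec_def matrix_vector_mult_def sum_distrib_left mult_ac)

lemma tens_sum_right: "finite Y \<Longrightarrow> tens e (\<Sum>y\<in>Y. f y) = (\<Sum>y\<in>Y. tens e (f y))"
  by (simp add: tens_def vec_eq_iff sum_component sum_distrib_left)

lemma effects_nonneg_imp_scaled_state:
  fixes v :: "real^'a::finite"
  assumes "state_space a0 \<Omega>" and "\<Omega> \<noteq> {}" and nonneg: "\<forall>e\<in>effects \<Omega>. 0 \<le> e \<bullet> v"
  shows "\<exists>\<omega>\<in>\<Omega>. v = (v $ a0) *\<^sub>R \<omega>"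
proof (rule ccontr)
  assume not_scaled: "\<not> ?thesis"
  have "compact \<Omega>" "convex \<Omega>" and normalised: "\<And>\<omega>. \<omega> \<in> \<Omega> \<Longrightarrow> \<omega> $ a0 = 1"
    using assms(1) by (auto simp: state_space_def)
  let ?S = "(\<lambda>x. (v $ a0) *\<^sub>R x) ` \<Omega>"
  have "v \<notin> ?S" using not_scaled by auto
  moreover have "convex ?S" using \<open>convex \<Omega>\<close> by (rule convex_scaling)
  moreover have "closed ?S" using \<open>compact \<Omega>\<close> by (intro compact_imp_closed compact_scaling)
  ultimately obtain c b where sep: "c \<bullet> v < b" "\<forall>x\<in>?S. b < c \<bullet> x"
    using separating_hyperplane_closed_point by blast
  have cont: "continuous_on \<Omega> (\<lambda>x. c \<bullet> x)" by (intro continuous_intros)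
  obtain w0 where "w0 \<in> \<Omega>" "\<forall>y\<in>\<Omega>. c \<bullet> w0 \<le> c \<bullet> y"
    using continuous_attains_inf[OF \<open>compact \<Omega>\<close> \<open>\<Omega> \<noteq> {}\<close> cont] by blast
  obtain w1 where "\<forall>y\<in>\<Omega>. c \<bullet> y \<le> c \<bullet> w1"
    using continuous_attains_sup[OF \<open>compact \<Omega>\<close> \<open>\<Omega> \<noteq> {}\<close> cont] by blast
  define m where "m = c \<bullet> w0"
  define K where "K = c \<bullet> w1 - m + 1"
  have "K > 0" using \<open>\<forall>y\<in>\<Omega>. c \<bullet> y \<le> c \<bullet> w1\<close> \<open>w0 \<in> \<Omega>\<close> unfolding K_def m_def by force
  \<comment> \<open>The separating functional, shifted and rescaled so that it takes values in [0,1] on \<Omega>.\<close>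
  define e where "e = (1 / K) *\<^sub>R (c - m *\<^sub>R unit_eff a0)"
  have e_inner: "e \<bullet> x = (c \<bullet> x - m * x $ a0) / K" for x
    unfolding e_def by (simp add: inner_diff_left unit_eff_inner divide_simps)
  have "e \<in> effects \<Omega>"
    unfolding effects_def
  proof safe
    fix \<omega> assume "\<omega> \<in> \<Omega>"
    then have "m \<le> c \<bullet> \<omega>" "c \<bullet> \<omega> \<le> c \<bullet> w1" "\<omega> $ a0 = 1"
      using \<open>\<forall>y\<in>\<Omega>. c \<bullet> w0 \<le> c \<bullet> y\<close> \<open>\<forall>y\<in>\<Omega>. c \<bullet> y \<le> c \<bullet> w1\<close> normalised unfolding m_def by auto
    then show "0 \<le> e \<bullet> \<omega>" "e \<bullet> \<omega> \<le> 1" using \<open>K > 0\<close> unfolding e_inner K_def by (auto simp: divide_simps)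
  qed
  then have "0 \<le> e \<bullet> v" using nonneg by blast
  moreover have "c \<bullet> v < v $ a0 * m"
    using sep \<open>w0 \<in> \<Omega>\<close> unfolding m_def by force
  ultimately show False using \<open>K > 0\<close> unfolding e_inner by (simp add: divide_simps mult.commute)
qed

lemma max_tensor_left_nonempty:
  assumes "state_space b0 \<Omega>B" and "\<phi> \<in> max_tensor a0 b0 \<Omega>A \<Omega>B"
  shows "\<Omega>A \<noteq> {}"
proof
  assume "\<Omega>A = {}"
  \<comment> \<open>Then every vector is an effect, in particular -u.\<close>
  then have "- unit_eff a0 \<in> effects \<Omega>A" by (simp add: effects_def)
  then have "0 \<le> tens (- unit_eff a0) (unit_eff b0) \<bullet> \<phi>"
    using assms unit_eff_in_effects[OF assms(1)] unfolding max_tensor_def by blast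
  moreover have "tens (unit_eff a0) (unit_eff b0) \<bullet> \<phi> = 1"
    using assms(2) unfolding max_tensor_def by blast
  ultimately show False by (simp add: tens_inner)
qed

lemma max_tensor_steering:
  assumes "state_space a0 \<Omega>A" and "state_space b0 \<Omega>B"
    and \<phi>: "\<phi> \<in> max_tensor a0 b0 \<Omega>A \<Omega>B" and "f \<in> effects \<Omega>B"
  shows "0 \<le> (\<phi> *v f) $ a0" and "\<exists>\<omega>\<in>\<Omega>A. \<phi> *v f = (\<phi> *v f) $ a0 *\<^sub>R \<omega>"
proof -
  have nonneg: "\<forall>e\<in>effects \<Omega>A. 0 \<le> e \<bullet> (\<phi> *v f)"
    using \<phi> \<open>f \<in> effects \<Omega>B\<close> unfolding max_tensor_def by (auto simp: tens_inner)
  then show "0 \<le> (\<phi> *v f) $ a0"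
    using unit_eff_in_effects[OF assms(1)] by (auto simp: unit_eff_inner)
  show "\<exists>\<omega>\<in>\<Omega>A. \<phi> *v f = (\<phi> *v f) $ a0 *\<^sub>R \<omega>"
    using effects_nonneg_imp_scaled_state[OF assms(1) max_tensor_left_nonempty[OF assms(2) \<phi>] nonneg] .
qed

lemma max_tensor_steering_weights_sum:
  assumes "\<phi> \<in> max_tensor a0 b0 \<Omega>A \<Omega>B" and "finite Y" and "(\<Sum>y\<in>Y. f y) = unit_eff b0"
  shows "(\<Sum>y\<in>Y. (\<phi> *v f y) $ a0) = 1"
proof -
  have "(\<Sum>y\<in>Y. (\<phi> *v f y) $ a0) = tens (unit_eff a0) (\<Sum>y\<in>Y. f y) \<bullet> \<phi>"
    using assms(2) by (simp add: tens_sum_right inner_sum_left tens_inner unit_eff_inner)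
  then show ?thesis using assms(1,3) by (simp add: max_tensor_def)
qed

lemma max_tensor_steering_family:
  assumes "state_space a0 \<Omega>A" and "state_space b0 \<Omega>B"
    and \<phi>: "\<phi> \<in> max_tensor a0 b0 \<Omega>A \<Omega>B" and "finite Y"
    and f: "\<forall>z\<in>Z. (\<forall>y\<in>Y. f z y \<in> effects \<Omega>B) \<and> (\<Sum>y\<in>Y. f z y) = unit_eff b0"
  obtains \<omega> l where "\<And>z y. z \<in> Z \<Longrightarrow> y \<in> Y \<Longrightarrow> \<omega> z y \<in> \<Omega>A \<and> \<phi> *v f z y = l z y *\<^sub>R \<omega> z y"
    and "\<And>z y. z \<in> Z \<Longrightarrow> y \<in> Y \<Longrightarrow> 0 \<le> l z y" and "\<And>z. z \<in> Z \<Longrightarrow> (\<Sum>y\<in>Y. l z y) = 1"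
proof -
  define l where "l z y = (\<phi> *v f z y) $ a0" for z y
  have "\<forall>z\<in>Z. \<forall>y\<in>Y. \<exists>\<omega>. \<omega> \<in> \<Omega>A \<and> \<phi> *v f z y = l z y *\<^sub>R \<omega>"
    using max_tensor_steering(2)[OF assms(1,2) \<phi>] f unfolding l_def by blast
  then obtain \<omega> where \<omega>: "\<forall>z\<in>Z. \<forall>y\<in>Y. \<omega> z y \<in> \<Omega>A \<and> \<phi> *v f z y = l z y *\<^sub>R \<omega> z y"
    by metis
  show ?thesis
  proof (rule that)
    show "\<omega> z y \<in> \<Omega>A \<and> \<phi> *v f z y = l z y *\<^sub>R \<omega> z y" if "z \<in> Z" "y \<in> Y" for z y
      using \<omega> that by blast
    show "0 \<le> l z y" if "z \<in> Z" "y \<in> Y" for z y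
      using max_tensor_steering(1)[OF assms(1,2) \<phi>] f that unfolding l_def by blast
    show "(\<Sum>y\<in>Y. l z y) = 1" if "z \<in> Z" for z
      using max_tensor_steering_weights_sum[OF \<phi> \<open>finite Y\<close>] f that unfolding l_def by blast
  qed
qed

lemma decoding_prob_decomposition:
  assumes "finite Y2" and "y2 \<in> Y2"
    and steer: "\<And>z y. z \<in> Z \<Longrightarrow> y \<in> Y2 \<Longrightarrow> \<phi> *v f z y = l z y *\<^sub>R \<omega> z y"
  shows "(\<Sum>z\<in>Z. q z *\<^sub>R tens (e z y1) (f z y2)) \<bullet> (M ** \<phi>)
    = (\<Sum>(z, y)\<in>Z \<times> Y2. q z * l z y * (if y2 = y then e z y1 \<bullet> (M *v \<omega> z y) else 0))"
proof -
  have "(\<Sum>z\<in>Z. q z *\<^sub>R tens (e z y1) (f z y2)) \<bullet> (M ** \<phi>)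
      = (\<Sum>z\<in>Z. q z * (e z y1 \<bullet> (M *v (\<phi> *v f z y2))))"
    by (simp add: inner_sum_left tens_inner matrix_vector_mul_assoc)
  also have "\<dots> = (\<Sum>z\<in>Z. q z * l z y2 * (e z y1 \<bullet> (M *v \<omega> z y2)))"
    using steer \<open>y2 \<in> Y2\<close> by (intro sum.cong refl) (simp add: matrix_vector_mult_scaleR)
  also have "\<dots> = (\<Sum>(z, y)\<in>Z \<times> Y2. q z * l z y * (if y2 = y then e z y1 \<bullet> (M *v \<omega> z y) else 0))"
    using assms(1,2) unfolding sum.cartesian_product[symmetric] by (simp add: if_distrib cong: if_cong)
  finally show ?thesis .
qed

theorem proposition5:
  fixes a0 :: "'a::finite" and b0 :: "'b::finite"
    and \<Omega>A :: "(real^'a) set" and \<Omega>B :: "(real^'b) set" and \<Omega>AB :: "(real^'b^'a) set"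
    and \<phi> :: "real^'b^'a"
    and X :: "'x set" and p :: "'x \<Rightarrow> real" and T :: "'x \<Rightarrow> real^'a^'a"
    and Z :: "'z set" and q :: "'z \<Rightarrow> real"
    and Y1 :: "'y1 set" and Y2 :: "'y2 set"
    and e :: "'z \<Rightarrow> 'y1 \<Rightarrow> real^'a" and f :: "'z \<Rightarrow> 'y2 \<Rightarrow> real^'b"
  assumes "state_space a0 \<Omega>A" and "state_space b0 \<Omega>B"
    and "closed \<Omega>AB" and "convex \<Omega>AB"
    and "min_tensor \<Omega>A \<Omega>B \<subseteq> \<Omega>AB" and "\<Omega>AB \<subseteq> max_tensor a0 b0 \<Omega>A \<Omega>B"
    and "\<phi> \<in> \<Omega>AB"
    and "prob_dist X p"
    and "\<forall>x\<in>X. allowed_local_A \<Omega>A \<Omega>AB (T x)"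
    and "prob_dist Z q"
    and "finite Y1" and "finite Y2"
    and "\<forall>z\<in>Z. (\<forall>y1\<in>Y1. e z y1 \<in> effects \<Omega>A) \<and> (\<Sum>y1\<in>Y1. e z y1) = unit_eff a0"
    and "\<forall>z\<in>Z. (\<forall>y2\<in>Y2. f z y2 \<in> effects \<Omega>B) \<and> (\<Sum>y2\<in>Y2. f z y2) = unit_eff b0"
  shows "ereal (mutual_info X (Y1 \<times> Y2) p
            (\<lambda>x (y1, y2). (\<Sum>z\<in>Z. q z *\<^sub>R tens (e z y1) (f z y2)) \<bullet> (T x ** \<phi>)))
         \<le> classical_capacity a0 \<Omega>A"
proof -
  have \<phi>: "\<phi> \<in> max_tensor a0 b0 \<Omega>A \<Omega>B" using assms(6,7) by blast
  obtain \<omega> l where \<omega>: "\<And>z y. z \<in> Z \<Longrightarrow> y \<in> Y2 \<Longrightarrow> \<omega> z y \<in> \<Omega>A \<and> \<phi> *v f z y = l z y *\<^sub>R \<omega> z y"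
    and l: "\<And>z y. z \<in> Z \<Longrightarrow> y \<in> Y2 \<Longrightarrow> 0 \<le> l z y" "\<And>z. z \<in> Z \<Longrightarrow> (\<Sum>y\<in>Y2. l z y) = 1"
    using max_tensor_steering_family[OF assms(1,2) \<phi> assms(12,14)] by metis
  define w where "w = (\<lambda>(z, y). q z * l z y)"
  define C where "C = (\<lambda>(z, y2) x (y1, y2'). if y2' = y2 then e z y1 \<bullet> (T x *v \<omega> z y2) else 0)"
  have "(\<Sum>z\<in>Z. q z *\<^sub>R tens (e z y1) (f z y2)) \<bullet> (T x ** \<phi>) = (\<Sum>k\<in>Z \<times> Y2. w k * C k x (y1, y2))"
    if "y2 \<in> Y2" for x y1 y2
  proof -
    have "(\<Sum>z\<in>Z. q z *\<^sub>R tens (e z y1) (f z y2)) \<bullet> (T x ** \<phi>)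
      = (\<Sum>(z, y)\<in>Z \<times> Y2. q z * l z y * (if y2 = y then e z y1 \<bullet> (T x *v \<omega> z y) else 0))"
      using \<omega> that assms(12) by (intro decoding_prob_decomposition) auto
    then show ?thesis unfolding w_def C_def by (simp add: case_prod_beta' cong: if_cong)
  qed
  then have "mutual_info X (Y1 \<times> Y2) p
      (\<lambda>x (y1, y2). (\<Sum>z\<in>Z. q z *\<^sub>R tens (e z y1) (f z y2)) \<bullet> (T x ** \<phi>))
    = mutual_info X (Y1 \<times> Y2) p (\<lambda>x y. \<Sum>k\<in>Z \<times> Y2. w k * C k x y)"
    by (intro mutual_info_cong) auto
  also have "ereal \<dots> \<le> classical_capacity a0 \<Omega>A"
  proof (rule mutual_info_mixture_le)
    show "prob_dist (Z \<times> Y2) w"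
      unfolding w_def using assms(10,12) l by (rule prob_dist_mixture_kernel)
    show "0 \<le> C k x y" if "k \<in> Z \<times> Y2" "x \<in> X" "y \<in> Y1 \<times> Y2" for k x y
      using that assms(9,13) \<omega> by (auto simp: C_def allowed_local_A_def effects_def)
    show "ereal (mutual_info X (Y1 \<times> Y2) p (C k)) \<le> classical_capacity a0 \<Omega>A" if "k \<in> Z \<times> Y2" for k
      using that assms(8,9,11,13) \<omega>
      by (auto simp: C_def allowed_local_A_def mutual_info_pad_outcome[OF assms(12)]
          intro!: mutual_info_le_classical_capacity)
  qed (use assms(8) in \<open>auto simp: prob_dist_def\<close>)
  finally show ?thesis .
qed

end
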